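(* Let $Y$ be a Banach space, let $1 \le p \le \infty$ or $p = 0$, and let $\mathcal{Z} = \big(\sum Y\big)_p$. Let $T \in \mathcal{L}(\mathcal{Z})$. Then the operators $P_0 T$ and $T P_0$ are commutators in $\mathcal{L}(\mathcal{Z})$, i.e. each is of the form $AB - BA$ with $A, B \in \mathcal{L}(\mathcal{Z})$.
   Context: For a Banach space $Y$ and $1\le p\le\infty$, $\big(\sum Y\big)_p$ is the space of sequences $(y_i)_{i\ge 0}$ with $y_i \in Y$ and $(\|y_i\|)_i \in \ell_p$, normed by $\|(y_i)\| = \|(\|y_i\|)_i\|_{\ell_p}$; for $p=0$ it is the space of sequences with $\|y_i\| \to 0$ and the sup norm (the $c_0$-sum). $P_0$ is the natural norm one projection $P_0(y_0, y_1, \ldots) = (y_0, 0, 0, \ldots)$ onto the $0$-th component. *)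

theory Defs
  imports "HOL-Analysis.Analysis"
begin

text \<open>Index of the direct sum: LP p for 1 <= p < infinity, LInf for p = infinity,
  C0 for the c_0-sum (the paper's p = 0).\<close>
datatype sum_index = LP real | LInf | C0

definition valid_index :: "sum_index \<Rightarrow> bool" where
  "valid_index q \<longleftrightarrow> (case q of LP p \<Rightarrow> 1 \<le> p | LInf \<Rightarrow> True | C0 \<Rightarrow> True)"

definition psum_space :: "sum_index \<Rightarrow> (nat \<Rightarrow> 'a::real_normed_vector) set" where
  "psum_space q = (case q of
      LP p \<Rightarrow> {y. summable (\<lambda>i. norm (y i) powr p)}
    | LInf \<Rightarrow> {y. bdd_above (range (\<lambda>i. norm (y i)))}
    | C0 \<Rightarrow> {y. (\<lambda>i. norm (y i)) \<longlonglongrightarrow> 0})"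

definition psum_norm :: "sum_index \<Rightarrow> (nat \<Rightarrow> 'a::real_normed_vector) \<Rightarrow> real" where
  "psum_norm q y = (case q of
      LP p \<Rightarrow> (\<Sum>i. norm (y i) powr p) powr (1 / p)
    | LInf \<Rightarrow> (SUP i. norm (y i))
    | C0 \<Rightarrow> (SUP i. norm (y i)))"

text \<open>Bounded linear operators on (sum Y)_q (only their values on the space matter).\<close>
definition bounded_op :: "sum_index \<Rightarrow> ((nat \<Rightarrow> 'a::real_normed_vector) \<Rightarrow> (nat \<Rightarrow> 'a)) \<Rightarrow> bool" where
  "bounded_op q T \<longleftrightarrow>
     (\<forall>x\<in>psum_space q. T x \<in> psum_space q) \<and>
     (\<forall>x\<in>psum_space q. \<forall>y\<in>psum_space q. T (\<lambda>i. x i + y i) = (\<lambda>i. T x i + T y i)) \<and>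
     (\<forall>c. \<forall>x\<in>psum_space q. T (\<lambda>i. c *\<^sub>R x i) = (\<lambda>i. c *\<^sub>R T x i)) \<and>
     (\<exists>K. \<forall>x\<in>psum_space q. psum_norm q (T x) \<le> K * psum_norm q x)"

definition P0 :: "(nat \<Rightarrow> 'a::zero) \<Rightarrow> (nat \<Rightarrow> 'a)" where
  "P0 y = (\<lambda>i. if i = 0 then y 0 else 0)"

definition is_commutator :: "sum_index \<Rightarrow> ((nat \<Rightarrow> 'a::real_normed_vector) \<Rightarrow> (nat \<Rightarrow> 'a)) \<Rightarrow> bool" where
  "is_commutator q S \<longleftrightarrow> (\<exists>A B. bounded_op q A \<and> bounded_op q B \<and>
      (\<forall>z\<in>psum_space q. S z = (\<lambda>i. A (B z) i - B (A z) i)))"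

end

theory Submission
  imports Defs
begin

text \<open>Let \<open>L\<close> and \<open>R\<close> be the left and right shifts, so that \<open>L R = I\<close> and \<open>P\<^sub>0 = I - R L\<close>,
  and let \<open>D\<close> be the diagonal operator acting in every component as the \<open>(0,0)\<close> entry
  \<open>d\<close> of \<open>T\<close>. \<open>D\<close> commutes with both shifts, and
  \<open>D - R D L = P\<^sub>0 D = P\<^sub>0 T P\<^sub>0\<close>. With \<open>B = R D - P\<^sub>0 T R\<close> one gets
  \<open>L B - B L = P\<^sub>0 D + P\<^sub>0 T R L = P\<^sub>0 T\<close>, and with \<open>A = L D - L T P\<^sub>0\<close> one gets
  \<open>A R - R A = P\<^sub>0 D + R L T P\<^sub>0 = T P\<^sub>0\<close>, using \<open>L P\<^sub>0 = 0\<close> and \<open>P\<^sub>0 R = 0\<close>.\<close>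

definition shl :: "(nat \<Rightarrow> 'a) \<Rightarrow> nat \<Rightarrow> 'a" where
  "shl z = (\<lambda>i. z (Suc i))"

definition shr :: "(nat \<Rightarrow> 'a::zero) \<Rightarrow> nat \<Rightarrow> 'a" where
  "shr z = (\<lambda>i. if i = 0 then 0 else z (i - 1))"

definition diagop :: "('a \<Rightarrow> 'b) \<Rightarrow> (nat \<Rightarrow> 'a) \<Rightarrow> nat \<Rightarrow> 'b" where
  "diagop d z = (\<lambda>i. d (z i))"

lemma P0_decompose: "z = (\<lambda>i. P0 z i + shr (shl z) i)" for z :: "nat \<Rightarrow> 'a::monoid_add"
  by (auto simp: fun_eq_iff P0_def shr_def shl_def)

subsection \<open>Supremum norms\<close>

lemma norm_le_SUP_norm:
  fixes z :: "nat \<Rightarrow> 'a::real_normed_vector"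
  assumes "bdd_above (range (\<lambda>i. norm (z i)))"
  shows "norm (z i) \<le> (SUP i. norm (z i))"
  using assms by (auto intro: cSUP_upper)

lemma SUP_norm_le:
  fixes f :: "nat \<Rightarrow> 'a::real_normed_vector"
  assumes "\<And>i. norm (f i) \<le> M"
  shows "bdd_above (range (\<lambda>i. norm (f i))) \<and> (SUP i. norm (f i)) \<le> M"
  using assms by (auto intro!: cSUP_least bdd_aboveI2)

lemma SUP_norm_nonneg:
  fixes z :: "nat \<Rightarrow> 'a::real_normed_vector"
  assumes "bdd_above (range (\<lambda>i. norm (z i)))"
  shows "0 \<le> (SUP i. norm (z i))"
  using norm_le_SUP_norm[OF assms, of 0] norm_ge_zero[of "z 0"] by linarith

lemma SUP_norm_dominated:
  fixes z :: "nat \<Rightarrow> 'a::real_normed_vector" and f :: "nat \<Rightarrow> 'b::real_normed_vector"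
  assumes "bdd_above (range (\<lambda>i. norm (z i)))" and "0 \<le> c"
    and "\<And>i. norm (f i) \<le> c * norm (z i)"
  shows "bdd_above (range (\<lambda>i. norm (f i))) \<and> (SUP i. norm (f i)) \<le> c * (SUP i. norm (z i))"
  by (rule SUP_norm_le, rule order_trans[OF assms(3)])
    (intro mult_left_mono norm_le_SUP_norm assms)

lemma SUP_norm_add:
  fixes f g :: "nat \<Rightarrow> 'a::real_normed_vector"
  assumes "bdd_above (range (\<lambda>i. norm (f i)))" and "bdd_above (range (\<lambda>i. norm (g i)))"
  shows "bdd_above (range (\<lambda>i. norm (f i + g i))) \<and>
    (SUP i. norm (f i + g i)) \<le> (SUP i. norm (f i)) + (SUP i. norm (g i))"
  by (rule SUP_norm_le, rule order_trans[OF norm_triangle_ineq])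
    (intro add_mono norm_le_SUP_norm assms)

lemma null_seq_bdd_above:
  fixes z :: "nat \<Rightarrow> 'a::real_normed_vector"
  assumes "(\<lambda>i. norm (z i)) \<longlonglongrightarrow> 0"
  shows "bdd_above (range (\<lambda>i. norm (z i)))"
proof -
  have "Bseq (\<lambda>i. norm (z i))" using assms by (auto intro: convergent_imp_Bseq convergentI)
  then show ?thesis by (simp add: Bseq_eq_bounded bounded_imp_bdd_above)
qed

subsection \<open>\<open>\<ell>\<^sub>p\<close> norms\<close>

lemma lp_dominated:
  fixes z :: "nat \<Rightarrow> 'a::real_normed_vector" and f :: "nat \<Rightarrow> 'b::real_normed_vector"
  assumes p: "0 < p" and s: "summable (\<lambda>i. norm (z i) powr p)" and c: "0 \<le> c"
    and le: "\<And>i. norm (f i) \<le> c * norm (z i)"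
  shows "summable (\<lambda>i. norm (f i) powr p) \<and>
    (\<Sum>i. norm (f i) powr p) powr (1/p) \<le> c * (\<Sum>i. norm (z i) powr p) powr (1/p)"
proof -
  have term_le: "norm (f i) powr p \<le> c powr p * norm (z i) powr p" for i
  proof -
    have "norm (f i) powr p \<le> (c * norm (z i)) powr p"
      using p le[of i] by (intro powr_mono2) auto
    also have "\<dots> = c powr p * norm (z i) powr p" using c by (simp add: powr_mult)
    finally show ?thesis .
  qed
  have s2: "summable (\<lambda>i. c powr p * norm (z i) powr p)" using s by (rule summable_mult)
  have sf: "summable (\<lambda>i. norm (f i) powr p)"
    by (rule summable_comparison_test[OF _ s2]) (use term_le in auto)
  have "(\<Sum>i. norm (f i) powr p) \<le> (\<Sum>i. c powr p * norm (z i) powr p)"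
    by (rule suminf_le[OF term_le sf s2])
  also have "\<dots> = c powr p * (\<Sum>i. norm (z i) powr p)" using s by (rule suminf_mult)
  finally have "(\<Sum>i. norm (f i) powr p) powr (1/p) \<le> (c powr p * (\<Sum>i. norm (z i) powr p)) powr (1/p)"
    using p sf by (intro powr_mono2 suminf_nonneg) auto
  also have "\<dots> = c * (\<Sum>i. norm (z i) powr p) powr (1/p)"
    using p c s by (simp add: powr_mult powr_powr suminf_nonneg)
  finally show ?thesis using sf by simp
qed

lemma norm_le_lp_norm:
  fixes z :: "nat \<Rightarrow> 'a::real_normed_vector"
  assumes p: "0 < p" and s: "summable (\<lambda>i. norm (z i) powr p)"
  shows "norm (z i) \<le> (\<Sum>i. norm (z i) powr p) powr (1/p)"
proof -
  have "norm (z i) powr p \<le> (\<Sum>i. norm (z i) powr p)"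
    using sum_le_suminf[OF s, of "{i}"] by simp
  then have "(norm (z i) powr p) powr (1/p) \<le> (\<Sum>i. norm (z i) powr p) powr (1/p)"
    using p by (intro powr_mono2) auto
  then show ?thesis using p by (simp add: powr_powr)
qed

lemma lp_shl:
  fixes z :: "nat \<Rightarrow> 'a::real_normed_vector"
  assumes p: "0 < p" and s: "summable (\<lambda>i. norm (z i) powr p)"
  shows "summable (\<lambda>i. norm (shl z i) powr p) \<and>
    (\<Sum>i. norm (shl z i) powr p) powr (1/p) \<le> (\<Sum>i. norm (z i) powr p) powr (1/p)"
proof -
  have s1: "summable (\<lambda>i. norm (shl z i) powr p)"
    using summable_Suc_iff[of "\<lambda>i. norm (z i) powr p"] s by (simp add: shl_def)
  have "(\<Sum>i. norm (shl z i) powr p) = (\<Sum>i. norm (z i) powr p) - norm (z 0) powr p"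
    using suminf_split_head[OF s] by (simp add: shl_def)
  then have "(\<Sum>i. norm (shl z i) powr p) \<le> (\<Sum>i. norm (z i) powr p)" by simp
  then show ?thesis using s1 p by (auto intro!: powr_mono2 suminf_nonneg)
qed

lemma lp_shr:
  fixes z :: "nat \<Rightarrow> 'a::real_normed_vector"
  assumes s: "summable (\<lambda>i. norm (z i) powr p)"
  shows "summable (\<lambda>i. norm (shr z i) powr p) \<and>
    (\<Sum>i. norm (shr z i) powr p) = (\<Sum>i. norm (z i) powr p)"
proof -
  have shift: "(\<lambda>i. norm (shr z (Suc i)) powr p) = (\<lambda>i. norm (z i) powr p)"
    by (simp add: shr_def)
  have s1: "summable (\<lambda>i. norm (shr z i) powr p)"
    using s shift summable_Suc_iff[of "\<lambda>i. norm (shr z i) powr p"] by simp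
  show ?thesis using s1 suminf_split_head[OF s1] by (simp add: shift shr_def)
qed

lemma lp_P0:
  fixes z :: "nat \<Rightarrow> 'a::real_normed_vector"
  assumes p: "0 < p"
  shows "summable (\<lambda>i. norm (P0 z i) powr p) \<and> (\<Sum>i. norm (P0 z i) powr p) powr (1/p) = norm (z 0)"
proof -
  have "(\<lambda>i. norm (P0 z i) powr p) = (\<lambda>i. if i = 0 then norm (z 0) powr p else 0)"
    by (auto simp: P0_def)
  moreover have "(\<lambda>i. if i = 0 then norm (z 0) powr p else 0) sums (norm (z 0) powr p)"
    using sums_single[of 0 "\<lambda>_. norm (z 0) powr p"] by simp
  ultimately show ?thesis using p by (simp add: sums_iff powr_powr)
qed

lemma powr_add_le_two_powr:
  fixes a b :: real
  assumes "0 \<le> a" "0 \<le> b" "0 \<le> p"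
  shows "(a + b) powr p \<le> 2 powr p * (a powr p + b powr p)"
proof -
  have "(a + b) powr p \<le> (2 * max a b) powr p" using assms by (intro powr_mono2) auto
  also have "\<dots> = 2 powr p * max a b powr p" using assms by (simp add: powr_mult)
  also have "max a b powr p \<le> a powr p + b powr p" by (cases "a \<le> b") (auto simp: max_def)
  finally show ?thesis by simp
qed

text \<open>A quasi-triangle inequality suffices for boundedness, so Minkowski's inequality is avoided.\<close>

lemma lp_add:
  fixes f g :: "nat \<Rightarrow> 'a::real_normed_vector"
  assumes p: "1 \<le> p" and sf: "summable (\<lambda>i. norm (f i) powr p)"
    and sg: "summable (\<lambda>i. norm (g i) powr p)"
  shows "summable (\<lambda>i. norm (f i + g i) powr p) \<and>
    (\<Sum>i. norm (f i + g i) powr p) powr (1/p) \<le>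
      4 * ((\<Sum>i. norm (f i) powr p) powr (1/p) + (\<Sum>i. norm (g i) powr p) powr (1/p))"
proof -
  define F where "F = (\<Sum>i. norm (f i) powr p)"
  define G where "G = (\<Sum>i. norm (g i) powr p)"
  have F0: "0 \<le> F" and G0: "0 \<le> G"
    unfolding F_def G_def using sf sg by (auto intro: suminf_nonneg)
  have term_le: "norm (f i + g i) powr p \<le> 2 powr p * (norm (f i) powr p + norm (g i) powr p)" for i
    using p norm_triangle_ineq[of "f i" "g i"]
    by (intro order_trans[OF _ powr_add_le_two_powr] powr_mono2) auto
  have s2: "summable (\<lambda>i. 2 powr p * (norm (f i) powr p + norm (g i) powr p))"
    using summable_add[OF sf sg] by (rule summable_mult)
  have s3: "summable (\<lambda>i. norm (f i + g i) powr p)"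
    by (rule summable_comparison_test[OF _ s2]) (use term_le in auto)
  have "(\<Sum>i. norm (f i + g i) powr p) \<le> (\<Sum>i. 2 powr p * (norm (f i) powr p + norm (g i) powr p))"
    by (rule suminf_le[OF term_le s3 s2])
  also have "\<dots> = 2 powr p * (F + G)"
    using summable_add[OF sf sg] suminf_add[OF sf sg] unfolding F_def G_def
    by (simp add: suminf_mult)
  finally have "(\<Sum>i. norm (f i + g i) powr p) powr (1/p) \<le> (2 powr p * (F + G)) powr (1/p)"
    using p s3 by (intro powr_mono2 suminf_nonneg) auto
  also have "\<dots> = 2 * (F + G) powr (1/p)"
    using F0 G0 p by (simp add: powr_mult powr_powr)
  also have "(F + G) powr (1/p) \<le> 2 powr (1/p) * (F powr (1/p) + G powr (1/p))"
    using F0 G0 p by (intro powr_add_le_two_powr) auto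
  also have "2 powr (1/p) \<le> 2 powr 1"
    using p by (intro powr_mono) auto
  finally show ?thesis
    using s3 F0 G0 unfolding F_def G_def by (simp add: mult_right_mono)
qed

lemma valid_index_LP: "valid_index (LP p) \<Longrightarrow> 0 < p"
  by (simp add: valid_index_def)

lemma psum_dominated:
  fixes z :: "nat \<Rightarrow> 'a::real_normed_vector" and f :: "nat \<Rightarrow> 'b::real_normed_vector"
  assumes q: "valid_index q" and z: "z \<in> psum_space q" and c: "0 \<le> c"
    and le: "\<And>i. norm (f i) \<le> c * norm (z i)"
  shows "f \<in> psum_space q \<and> psum_norm q f \<le> c * psum_norm q z"
proof (cases q)
  case (LP p)
  then show ?thesis using z lp_dominated[OF valid_index_LP[OF q[unfolded LP]] _ c le]
    by (simp add: psum_space_def psum_norm_def)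
next
  case LInf
  then show ?thesis using z SUP_norm_dominated[OF _ c le]
    by (simp add: psum_space_def psum_norm_def)
next
  case C0
  have z0: "(\<lambda>i. norm (z i)) \<longlonglongrightarrow> 0" using z C0 by (simp add: psum_space_def)
  have "(\<lambda>i. c * norm (z i)) \<longlonglongrightarrow> 0" using tendsto_mult_right_zero[OF z0] by simp
  then have "(\<lambda>i. norm (f i)) \<longlonglongrightarrow> 0"
    by (rule Lim_null_comparison[rotated]) (use le in auto)
  then show ?thesis using C0 SUP_norm_dominated[OF null_seq_bdd_above[OF z0] c le]
    by (simp add: psum_space_def psum_norm_def)
qed

lemma psum_add:
  fixes f g :: "nat \<Rightarrow> 'a::real_normed_vector"
  assumes q: "valid_index q" and f: "f \<in> psum_space q" and g: "g \<in> psum_space q"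
  shows "(\<lambda>i. f i + g i) \<in> psum_space q \<and>
    psum_norm q (\<lambda>i. f i + g i) \<le> 4 * (psum_norm q f + psum_norm q g)"
proof (cases q)
  case (LP p)
  then show ?thesis using q f g lp_add[of p f g]
    by (simp add: valid_index_def psum_space_def psum_norm_def)
next
  case LInf
  then have bf: "bdd_above (range (\<lambda>i. norm (f i)))" and bg: "bdd_above (range (\<lambda>i. norm (g i)))"
    using f g by (auto simp: psum_space_def)
  show ?thesis using LInf SUP_norm_add[OF bf bg] SUP_norm_nonneg[OF bf] SUP_norm_nonneg[OF bg]
    by (simp add: psum_space_def psum_norm_def)
next
  case C0
  have f0: "(\<lambda>i. norm (f i)) \<longlonglongrightarrow> 0" and g0: "(\<lambda>i. norm (g i)) \<longlonglongrightarrow> 0"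
    using f g C0 by (auto simp: psum_space_def)
  have "(\<lambda>i. norm (f i + g i)) \<longlonglongrightarrow> 0"
    by (rule Lim_null_comparison[OF _ tendsto_add_zero[OF f0 g0]]) (simp add: norm_triangle_ineq)
  moreover have bf: "bdd_above (range (\<lambda>i. norm (f i)))" and bg: "bdd_above (range (\<lambda>i. norm (g i)))"
    using f0 g0 by (auto intro: null_seq_bdd_above)
  ultimately show ?thesis
    using C0 SUP_norm_add[OF bf bg] SUP_norm_nonneg[OF bf] SUP_norm_nonneg[OF bg]
    by (simp add: psum_space_def psum_norm_def)
qed

lemma psum_norm_nonneg:
  fixes z :: "nat \<Rightarrow> 'a::real_normed_vector"
  assumes z: "z \<in> psum_space q"
  shows "0 \<le> psum_norm q z"
proof (cases q)
  case LInf
  then show ?thesis using z SUP_norm_nonneg by (simp add: psum_space_def psum_norm_def)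
next
  case C0
  then show ?thesis using z SUP_norm_nonneg[OF null_seq_bdd_above]
    by (simp add: psum_space_def psum_norm_def)
qed (simp add: psum_norm_def)

lemma norm_le_psum_norm:
  fixes z :: "nat \<Rightarrow> 'a::real_normed_vector"
  assumes q: "valid_index q" and z: "z \<in> psum_space q"
  shows "norm (z i) \<le> psum_norm q z"
proof (cases q)
  case (LP p)
  then show ?thesis using z norm_le_lp_norm[OF valid_index_LP[OF q[unfolded LP]]]
    by (simp add: psum_space_def psum_norm_def)
next
  case LInf
  then show ?thesis using z norm_le_SUP_norm by (simp add: psum_space_def psum_norm_def)
next
  case C0
  then show ?thesis using z norm_le_SUP_norm[OF null_seq_bdd_above]
    by (simp add: psum_space_def psum_norm_def)
qed

lemma psum_shl:
  fixes z :: "nat \<Rightarrow> 'a::real_normed_vector"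
  assumes q: "valid_index q" and z: "z \<in> psum_space q"
  shows "shl z \<in> psum_space q \<and> psum_norm q (shl z) \<le> psum_norm q z"
proof (cases q)
  case (LP p)
  then show ?thesis using z lp_shl[OF valid_index_LP[OF q[unfolded LP]]]
    by (simp add: psum_space_def psum_norm_def)
next
  case LInf
  then have "bdd_above (range (\<lambda>i. norm (z i)))" using z by (simp add: psum_space_def)
  then have shl_le: "norm (shl z i) \<le> (SUP i. norm (z i))" for i
    unfolding shl_def by (rule norm_le_SUP_norm)
  show ?thesis using LInf SUP_norm_le[OF shl_le] by (simp add: psum_space_def psum_norm_def)
next
  case C0
  then have z0: "(\<lambda>i. norm (z i)) \<longlonglongrightarrow> 0" using z by (simp add: psum_space_def)
  have shl_le: "norm (shl z i) \<le> (SUP i. norm (z i))" for i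
    unfolding shl_def using z0 by (intro norm_le_SUP_norm null_seq_bdd_above)
  show ?thesis using C0 SUP_norm_le[OF shl_le] LIMSEQ_Suc[OF z0]
    by (simp add: psum_space_def psum_norm_def shl_def)
qed

lemma psum_shr:
  fixes z :: "nat \<Rightarrow> 'a::real_normed_vector"
  assumes q: "valid_index q" and z: "z \<in> psum_space q"
  shows "shr z \<in> psum_space q \<and> psum_norm q (shr z) \<le> psum_norm q z"
proof -
  have shr_le: "norm (shr z i) \<le> M" if "\<And>i. norm (z i) \<le> M" for M i
    using that by (cases i) (auto simp: shr_def intro: order_trans[OF norm_ge_zero])
  show ?thesis
  proof (cases q)
    case (LP p)
    then show ?thesis using z lp_shr[of z p] by (simp add: psum_space_def psum_norm_def)
  next
    case LInf
    then show ?thesis using z SUP_norm_le[OF shr_le[OF norm_le_SUP_norm]]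
      by (simp add: psum_space_def psum_norm_def)
  next
    case C0
    then have z0: "(\<lambda>i. norm (z i)) \<longlonglongrightarrow> 0" using z by (simp add: psum_space_def)
    then have "(\<lambda>i. norm (shr z (Suc i))) \<longlonglongrightarrow> 0" by (simp add: shr_def)
    then have "(\<lambda>i. norm (shr z i)) \<longlonglongrightarrow> 0" by (rule LIMSEQ_imp_Suc)
    then show ?thesis
      using C0 SUP_norm_le[OF shr_le[OF norm_le_SUP_norm[OF null_seq_bdd_above[OF z0]]]]
      by (simp add: psum_space_def psum_norm_def)
  qed
qed

lemma psum_P0:
  fixes z :: "nat \<Rightarrow> 'a::real_normed_vector"
  assumes q: "valid_index q"
  shows "P0 z \<in> psum_space q \<and> psum_norm q (P0 z) \<le> norm (z 0)"
proof -
  have le: "norm (P0 z i) \<le> norm (z 0)" for i by (simp add: P0_def)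
  show ?thesis
  proof (cases q)
    case (LP p)
    then show ?thesis using lp_P0[OF valid_index_LP[OF q[unfolded LP]], of z]
      by (simp add: psum_space_def psum_norm_def)
  next
    case LInf
    then show ?thesis using SUP_norm_le[OF le] by (simp add: psum_space_def psum_norm_def)
  next
    case C0
    have "\<forall>\<^sub>F i in sequentially. norm (P0 z i) = 0"
      by (rule eventually_sequentiallyI[of 1]) (simp add: P0_def)
    then have "(\<lambda>i. norm (P0 z i)) \<longlonglongrightarrow> 0" by (rule tendsto_eventually)
    then show ?thesis using C0 SUP_norm_le[OF le] by (simp add: psum_space_def psum_norm_def)
  qed
qed

subsection \<open>Bounded operators\<close>

lemma bounded_opI:
  assumes "\<And>x. x \<in> psum_space q \<Longrightarrow> A x \<in> psum_space q"
    and "\<And>x. x \<in> psum_space q \<Longrightarrow> psum_norm q (A x) \<le> K * psum_norm q x"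
    and "\<And>x y. x \<in> psum_space q \<Longrightarrow> y \<in> psum_space q \<Longrightarrow> A (\<lambda>i. x i + y i) = (\<lambda>i. A x i + A y i)"
    and "\<And>c x. x \<in> psum_space q \<Longrightarrow> A (\<lambda>i. c *\<^sub>R x i) = (\<lambda>i. c *\<^sub>R A x i)"
  shows "bounded_op q A"
  unfolding bounded_op_def using assms by blast

lemma bounded_op_into: "bounded_op q A \<Longrightarrow> x \<in> psum_space q \<Longrightarrow> A x \<in> psum_space q"
  unfolding bounded_op_def by blast

lemma bounded_op_add:
  "bounded_op q A \<Longrightarrow> x \<in> psum_space q \<Longrightarrow> y \<in> psum_space q \<Longrightarrow>
    A (\<lambda>i. x i + y i) = (\<lambda>i. A x i + A y i)"
  unfolding bounded_op_def by blast

lemma bounded_op_scaleR: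
  "bounded_op q A \<Longrightarrow> x \<in> psum_space q \<Longrightarrow> A (\<lambda>i. c *\<^sub>R x i) = (\<lambda>i. c *\<^sub>R A x i)"
  unfolding bounded_op_def by blast

lemma bounded_op_bound:
  fixes A :: "(nat \<Rightarrow> 'a::real_normed_vector) \<Rightarrow> nat \<Rightarrow> 'a"
  assumes "bounded_op q A"
  obtains K where "0 \<le> K" "\<And>x. x \<in> psum_space q \<Longrightarrow> psum_norm q (A x) \<le> K * psum_norm q x"
proof -
  obtain K where K: "\<And>x. x \<in> psum_space q \<Longrightarrow> psum_norm q (A x) \<le> K * psum_norm q x"
    using assms unfolding bounded_op_def by blast
  have "K * psum_norm q x \<le> max K 0 * psum_norm q x" if "x \<in> psum_space q" for x
    using psum_norm_nonneg[OF that] by (intro mult_right_mono) auto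
  then show ?thesis using that[of "max K 0"] K by force
qed

lemma bounded_op_compose:
  fixes A B :: "(nat \<Rightarrow> 'a::real_normed_vector) \<Rightarrow> nat \<Rightarrow> 'a"
  assumes A: "bounded_op q A" and B: "bounded_op q B"
  shows "bounded_op q (\<lambda>z. A (B z))"
proof -
  obtain KA where KA: "0 \<le> KA" "\<And>x. x \<in> psum_space q \<Longrightarrow> psum_norm q (A x) \<le> KA * psum_norm q x"
    using bounded_op_bound[OF A] by blast
  obtain KB where KB: "\<And>x. x \<in> psum_space q \<Longrightarrow> psum_norm q (B x) \<le> KB * psum_norm q x"
    using bounded_op_bound[OF B] by blast
  have "psum_norm q (A (B x)) \<le> (KA * KB) * psum_norm q x" if x: "x \<in> psum_space q" for x
  proof -
    have "psum_norm q (A (B x)) \<le> KA * psum_norm q (B x)"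
      using KA(2) bounded_op_into[OF B x] .
    also have "\<dots> \<le> KA * (KB * psum_norm q x)" using KB[OF x] KA(1) by (rule mult_left_mono)
    finally show ?thesis by simp
  qed
  then show ?thesis
    using A B by (intro bounded_opI) (simp_all add: bounded_op_into bounded_op_add bounded_op_scaleR)
qed

lemma bounded_op_diff:
  fixes A B :: "(nat \<Rightarrow> 'a::real_normed_vector) \<Rightarrow> nat \<Rightarrow> 'a"
  assumes q: "valid_index q" and A: "bounded_op q A" and B: "bounded_op q B"
  shows "bounded_op q (\<lambda>z i. A z i - B z i)"
proof -
  obtain KA where KA: "\<And>x. x \<in> psum_space q \<Longrightarrow> psum_norm q (A x) \<le> KA * psum_norm q x"
    using bounded_op_bound[OF A] by blast
  obtain KB where KB: "\<And>x. x \<in> psum_space q \<Longrightarrow> psum_norm q (B x) \<le> KB * psum_norm q x"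
    using bounded_op_bound[OF B] by blast
  have diff: "(\<lambda>i. A x i - B x i) \<in> psum_space q \<and>
      psum_norm q (\<lambda>i. A x i - B x i) \<le> (4 * (KA + KB)) * psum_norm q x"
    if x: "x \<in> psum_space q" for x
  proof -
    have neg: "(\<lambda>i. - B x i) \<in> psum_space q \<and> psum_norm q (\<lambda>i. - B x i) \<le> 1 * psum_norm q (B x)"
      by (rule psum_dominated[OF q bounded_op_into[OF B x]]) auto
    have "(\<lambda>i. A x i + - B x i) \<in> psum_space q \<and>
        psum_norm q (\<lambda>i. A x i + - B x i) \<le> 4 * (psum_norm q (A x) + psum_norm q (\<lambda>i. - B x i))"
      using psum_add[OF q bounded_op_into[OF A x]] neg by blast
    moreover have "4 * (psum_norm q (A x) + psum_norm q (\<lambda>i. - B x i)) \<le>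
        4 * (KA * psum_norm q x + KB * psum_norm q x)"
      using KA[OF x] KB[OF x] neg by simp
    ultimately show ?thesis by (simp add: algebra_simps)
  qed
  show ?thesis
    using A B diff
    by (intro bounded_opI[where K = "4 * (KA + KB)"])
      (simp_all add: bounded_op_add bounded_op_scaleR fun_eq_iff algebra_simps)
qed

lemma bounded_op_shl: "valid_index q \<Longrightarrow> bounded_op q shl"
  using psum_shl by (intro bounded_opI[where K = 1]) (auto simp: shl_def)

lemma bounded_op_shr: "valid_index q \<Longrightarrow> bounded_op q shr"
  using psum_shr by (intro bounded_opI[where K = 1]) (auto simp: shr_def fun_eq_iff)

lemma bounded_op_P0:
  assumes q: "valid_index q"
  shows "bounded_op q P0"
proof (rule bounded_opI[where K = 1])
  show "P0 x \<in> psum_space q" and "psum_norm q (P0 x) \<le> 1 * psum_norm q x"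
    if "x \<in> psum_space q" for x :: "nat \<Rightarrow> 'a"
    using psum_P0[OF q, of x] norm_le_psum_norm[OF q that, of 0] by auto
qed (auto simp: P0_def fun_eq_iff)

lemma bounded_op_diagop:
  fixes d :: "'a::real_normed_vector \<Rightarrow> 'a"
  assumes q: "valid_index q" and "0 \<le> K" and "\<And>x. norm (d x) \<le> K * norm x"
    and "\<And>x y. d (x + y) = d x + d y" and "\<And>c x. d (c *\<^sub>R x) = c *\<^sub>R d x"
  shows "bounded_op q (diagop d)"
  using psum_dominated[OF q _ assms(2), of _ "diagop d _"] assms(3-5)
  by (intro bounded_opI[where K = K]) (auto simp: diagop_def)

text \<open>The \<open>(0,0)\<close> matrix entry of \<open>T\<close>, an operator on \<open>Y\<close>: \<open>P0 (\<lambda>_. y)\<close> is \<open>y\<close> placed in the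
  0-th component.\<close>

definition corner :: "((nat \<Rightarrow> 'a::zero) \<Rightarrow> nat \<Rightarrow> 'b) \<Rightarrow> 'a \<Rightarrow> 'b" where
  "corner T y = T (P0 (\<lambda>_. y)) 0"

lemma corner_P0: "corner T (z 0) = T (P0 z) 0"
  by (simp add: corner_def P0_def)

lemma bounded_op_diagop_corner:
  fixes T :: "(nat \<Rightarrow> 'a::real_normed_vector) \<Rightarrow> nat \<Rightarrow> 'a"
  assumes q: "valid_index q" and T: "bounded_op q T"
  shows "bounded_op q (diagop (corner T))"
proof -
  obtain K where K: "0 \<le> K" "\<And>x. x \<in> psum_space q \<Longrightarrow> psum_norm q (T x) \<le> K * psum_norm q x"
    using bounded_op_bound[OF T] by blast
  have P0_const: "P0 (\<lambda>_. y) \<in> psum_space q" "psum_norm q (P0 (\<lambda>_. y)) \<le> norm y" for y :: 'a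
    using psum_P0[OF q, of "\<lambda>_. y"] by auto
  have "norm (corner T y) \<le> K * norm y" for y
  proof -
    have "norm (corner T y) \<le> psum_norm q (T (P0 (\<lambda>_. y)))"
      unfolding corner_def by (intro norm_le_psum_norm q bounded_op_into[OF T] P0_const)
    also have "\<dots> \<le> K * psum_norm q (P0 (\<lambda>_. y))" using K(2) P0_const(1) .
    also have "\<dots> \<le> K * norm y" using P0_const(2) K(1) by (rule mult_left_mono)
    finally show ?thesis .
  qed
  moreover have "P0 (\<lambda>_. x + y) = (\<lambda>i. P0 (\<lambda>_. x) i + P0 (\<lambda>_. y) i)"
    and "P0 (\<lambda>_. c *\<^sub>R x) = (\<lambda>i. c *\<^sub>R P0 (\<lambda>_. x) i)" for c and x y :: 'a
    by (auto simp: P0_def)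
  ultimately show ?thesis
    using K(1) bounded_op_add[OF T P0_const(1) P0_const(1)] bounded_op_scaleR[OF T P0_const(1)]
    by (intro bounded_op_diagop[OF q]) (auto simp: corner_def)
qed

lemma bounded_op_zero:
  fixes T :: "(nat \<Rightarrow> 'a::real_normed_vector) \<Rightarrow> nat \<Rightarrow> 'a"
  assumes "valid_index q" and "bounded_op q T"
  shows "T (\<lambda>_. 0) = (\<lambda>_. 0)"
proof -
  have "P0 (\<lambda>_. 0 :: 'a) \<in> psum_space q"
    using psum_P0[OF assms(1)] by blast
  from bounded_op_scaleR[OF assms(2) this, of 0] show ?thesis by simp
qed

lemma bounded_op_apply_0:
  fixes T :: "(nat \<Rightarrow> 'a::real_normed_vector) \<Rightarrow> nat \<Rightarrow> 'a"
  assumes q: "valid_index q" and T: "bounded_op q T" and z: "z \<in> psum_space q"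
  shows "T z 0 = corner T (z 0) + T (shr (shl z)) 0"
proof -
  have "P0 z \<in> psum_space q" "shr (shl z) \<in> psum_space q"
    using psum_P0[OF q] psum_shr[OF q conjunct1[OF psum_shl[OF q z]]] by auto
  from bounded_op_add[OF T this] have "T z = (\<lambda>i. T (P0 z) i + T (shr (shl z)) i)"
    by (simp flip: P0_decompose)
  then show ?thesis by (simp add: corner_P0)
qed

subsection \<open>The commutators\<close>

lemma P0_comp_is_commutator:
  fixes T :: "(nat \<Rightarrow> 'a::real_normed_vector) \<Rightarrow> nat \<Rightarrow> 'a"
  assumes q: "valid_index q" and T: "bounded_op q T"
  shows "is_commutator q (\<lambda>z. P0 (T z))"
proof -
  define B where "B = (\<lambda>z i. shr (diagop (corner T) z) i - P0 (T (shr z)) i)"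
  have "bounded_op q B"
    unfolding B_def
    by (intro bounded_op_diff bounded_op_compose[OF bounded_op_shr bounded_op_diagop_corner]
        bounded_op_compose[OF bounded_op_P0 bounded_op_compose[OF T bounded_op_shr]] q T)
  moreover have "P0 (T z) = (\<lambda>i. shl (B z) i - B (shl z) i)" if "z \<in> psum_space q" for z
  proof
    fix i
    show "P0 (T z) i = shl (B z) i - B (shl z) i"
      using bounded_op_apply_0[OF q T that]
      by (cases i) (simp_all add: B_def P0_def shl_def shr_def diagop_def)
  qed
  ultimately show ?thesis
    unfolding is_commutator_def using bounded_op_shl[OF q] by blast
qed

lemma comp_P0_is_commutator:
  fixes T :: "(nat \<Rightarrow> 'a::real_normed_vector) \<Rightarrow> nat \<Rightarrow> 'a"
  assumes q: "valid_index q" and T: "bounded_op q T"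
  shows "is_commutator q (\<lambda>z. T (P0 z))"
proof -
  define A where "A = (\<lambda>z i. shl (diagop (corner T) z) i - shl (T (P0 z)) i)"
  have "bounded_op q A"
    unfolding A_def
    by (intro bounded_op_diff bounded_op_compose[OF bounded_op_shl bounded_op_diagop_corner]
        bounded_op_compose[OF bounded_op_shl bounded_op_compose[OF T bounded_op_P0]] q T)
  moreover have "T (P0 z) = (\<lambda>i. A (shr z) i - shr (A z) i)" for z
  proof -
    have "P0 (shr z) = (\<lambda>_. 0)" by (simp add: fun_eq_iff P0_def shr_def)
    then have "T (P0 (shr z)) = (\<lambda>_. 0)" using bounded_op_zero[OF q T] by simp
    then have "T (P0 z) i = A (shr z) i - shr (A z) i" for i
      by (cases i) (simp_all add: A_def shl_def shr_def diagop_def corner_P0)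
    then show ?thesis by (rule ext)
  qed
  ultimately show ?thesis
    unfolding is_commutator_def using bounded_op_shr[OF q] by blast
qed

theorem mainTheorem8:
  fixes T :: "(nat \<Rightarrow> 'a::banach) \<Rightarrow> (nat \<Rightarrow> 'a)"
  assumes "valid_index q"
    and "bounded_op q T"
  shows "is_commutator q (\<lambda>z. P0 (T z)) \<and> is_commutator q (\<lambda>z. T (P0 z))"
  using P0_comp_is_commutator[OF assms] comp_P0_is_commutator[OF assms] by blast

end
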